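(* Let $\mathcal D=\mathcal D(\Gamma,(g_i),(\chi_i),(a_{ij}))$ be a datum of finite Cartan type and $\lambda$ a family of linking parameters for $\mathcal D$. Assume one of the following: (1) the Cartan matrix $(a_{ij})$ is simply laced ($a_{ij}\in\{0,-1\}$ for all $i\ne j$) and $\operatorname{ord}(q_{ii})$ is odd for all $1\le i\le\theta$; or (2) $q_{ii}$ is not a root of unity for all $1\le i\le\theta$. Then the linking graph of $(\mathcal D,\lambda)$ is bipartite.
   Context: $k$ is an algebraically closed field of characteristic zero. A datum of finite Cartan type $\mathcal D=\mathcal D(\Gamma,(g_i)_{1\le i\le\theta},(\chi_i)_{1\le i\le\theta},(a_{ij})_{1\le i,j\le\theta})$ consists of an abelian group $\Gamma$, elements $g_i\in\Gamma$, characters $\chi_i:\Gamma\to k^\times$, and a Cartan matrix $(a_{ij})$ of finite type such that, with $q_{ij}=\chi_j(g_i)$, $q_{ij}q_{ji}=q_{ii}^{a_{ij}}$ and $q_{ii}\ne1$ for all $i,j$. Write $i\sim j$ if $i,j$ lie in the same connected component of the Dynkin diagram of $(a_{ij})$; let $\mathcal X$ be the set of connected components of $\{1,\dots,\theta\}$. A family of linking parameters is $\lambda=(\lambda_{ij})_{1\le i,j\le\theta,\,i\not\sim j}$ with $\lambda_{ij}\in k$, $\lambda_{ij}=0$ whenever $g_ig_j=1$ or $\chi_i\chi_j\ne\varepsilon$ (trivial character), and $\lambda_{ji}=-q_{ji}\lambda_{ij}$. Vertices $i,j$ are linkable if $i\not\sim j$, $g_ig_j\ne1$ and $\chi_i\chi_j=\varepsilon$;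 they are linked if moreover $\lambda_{ij}\ne0$. The linking graph of $(\mathcal D,\lambda)$ has vertex set $\mathcal X$, with an edge between $J_1,J_2\in\mathcal X$ iff there are $i\in J_1$, $j\in J_2$ that are linked. A graph is bipartite if its vertex set is a disjoint union of two subsets with no edge inside either subset. *)

theory Defs
  imports "HOL-Computational_Algebra.Polynomial"
begin

(* The abelian group Gamma is a type
   'g :: ab_group_add, written additively: the product g_i g_j is g i + g j and
   the unit 1 is 0. Characters Gamma -> k^x are maps chi with chi(a+b)=chi a * chi b,
   chi a \<noteq> 0. *)

definition idx :: "nat \<Rightarrow> nat set" where
  "idx \<theta> = {1..\<theta>}"

definition is_character :: "('g::ab_group_add \<Rightarrow> 'k::field) \<Rightarrow> bool" where
  "is_character \<chi> \<longleftrightarrow> (\<forall>a b. \<chi> (a + b) = \<chi> a * \<chi> b) \<and> (\<forall>a. \<chi> a \<noteq> 0)"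

definition finite_type_cartan :: "nat \<Rightarrow> (nat \<Rightarrow> nat \<Rightarrow> int) \<Rightarrow> bool" where
  "finite_type_cartan \<theta> a \<longleftrightarrow>
     (\<forall>i\<in>idx \<theta>. a i i = 2) \<and>
     (\<forall>i\<in>idx \<theta>. \<forall>j\<in>idx \<theta>. i \<noteq> j \<longrightarrow> a i j \<le> 0) \<and>
     (\<forall>i\<in>idx \<theta>. \<forall>j\<in>idx \<theta>. a i j = 0 \<longleftrightarrow> a j i = 0) \<and>
     (\<exists>d :: nat \<Rightarrow> real. (\<forall>i\<in>idx \<theta>. d i > 0) \<and>
        (\<forall>i\<in>idx \<theta>. \<forall>j\<in>idx \<theta>. d i * of_int (a i j) = d j * of_int (a j i)) \<and>
        (\<forall>x :: nat \<Rightarrow> real. (\<exists>i\<in>idx \<theta>. x i \<noteq> 0) \<longrightarrow>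
           (\<Sum>i\<in>idx \<theta>. \<Sum>j\<in>idx \<theta>. x i * d i * of_int (a i j) * x j) > 0))"


definition qm :: "(nat \<Rightarrow> 'g \<Rightarrow> 'k) \<Rightarrow> (nat \<Rightarrow> 'g) \<Rightarrow> nat \<Rightarrow> nat \<Rightarrow> 'k" where
  "qm \<chi> g i j = \<chi> j (g i)"

definition finite_cartan_datum ::
  "nat \<Rightarrow> (nat \<Rightarrow> 'g::ab_group_add) \<Rightarrow> (nat \<Rightarrow> 'g \<Rightarrow> 'k::field) \<Rightarrow> (nat \<Rightarrow> nat \<Rightarrow> int) \<Rightarrow> bool" where
  "finite_cartan_datum \<theta> g \<chi> a \<longleftrightarrow>
     (\<forall>i\<in>idx \<theta>. is_character (\<chi> i)) \<and>
     finite_type_cartan \<theta> a \<and>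
     (\<forall>i\<in>idx \<theta>. \<forall>j\<in>idx \<theta>. qm \<chi> g i j * qm \<chi> g j i = qm \<chi> g i i powi a i j) \<and>
     (\<forall>i\<in>idx \<theta>. qm \<chi> g i i \<noteq> 1)"

definition dynkin_adj :: "nat \<Rightarrow> (nat \<Rightarrow> nat \<Rightarrow> int) \<Rightarrow> nat \<Rightarrow> nat \<Rightarrow> bool" where
  "dynkin_adj \<theta> a i j \<longleftrightarrow> i \<in> idx \<theta> \<and> j \<in> idx \<theta> \<and> i \<noteq> j \<and> a i j \<noteq> 0"

definition same_comp :: "nat \<Rightarrow> (nat \<Rightarrow> nat \<Rightarrow> int) \<Rightarrow> nat \<Rightarrow> nat \<Rightarrow> bool" where
  "same_comp \<theta> a i j \<longleftrightarrow> i \<in> idx \<theta> \<and> j \<in> idx \<theta> \<and>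
     (\<lambda>x y. dynkin_adj \<theta> a x y \<or> dynkin_adj \<theta> a y x)\<^sup>*\<^sup>* i j"

definition component :: "nat \<Rightarrow> (nat \<Rightarrow> nat \<Rightarrow> int) \<Rightarrow> nat \<Rightarrow> nat set" where
  "component \<theta> a i = {j. same_comp \<theta> a i j}"

definition components :: "nat \<Rightarrow> (nat \<Rightarrow> nat \<Rightarrow> int) \<Rightarrow> nat set set" where
  "components \<theta> a = component \<theta> a ` idx \<theta>"

definition trivial_product :: "(nat \<Rightarrow> 'g \<Rightarrow> 'k::field) \<Rightarrow> nat \<Rightarrow> nat \<Rightarrow> bool" where
  "trivial_product \<chi> i j \<longleftrightarrow> (\<forall>x. \<chi> i x * \<chi> j x = 1)"

definition linking_parameters ::
  "nat \<Rightarrow> (nat \<Rightarrow> 'g::ab_group_add) \<Rightarrow> (nat \<Rightarrow> 'g \<Rightarrow> 'k::field) \<Rightarrow> (nat \<Rightarrow> nat \<Rightarrow> int)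
     \<Rightarrow> (nat \<Rightarrow> nat \<Rightarrow> 'k) \<Rightarrow> bool" where
  "linking_parameters \<theta> g \<chi> a lam \<longleftrightarrow>
     (\<forall>i\<in>idx \<theta>. \<forall>j\<in>idx \<theta>. \<not> same_comp \<theta> a i j \<longrightarrow>
        ((g i + g j = 0 \<or> \<not> trivial_product \<chi> i j) \<longrightarrow> lam i j = 0) \<and>
        lam j i = - qm \<chi> g j i * lam i j)"

definition linkable ::
  "nat \<Rightarrow> (nat \<Rightarrow> 'g::ab_group_add) \<Rightarrow> (nat \<Rightarrow> 'g \<Rightarrow> 'k::field) \<Rightarrow> (nat \<Rightarrow> nat \<Rightarrow> int) \<Rightarrow> nat \<Rightarrow> nat \<Rightarrow> bool" where
  "linkable \<theta> g \<chi> a i j \<longleftrightarrow> i \<in> idx \<theta> \<and> j \<in> idx \<theta> \<and> \<not> same_comp \<theta> a i j \<and>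
     g i + g j \<noteq> 0 \<and> trivial_product \<chi> i j"

definition linked ::
  "nat \<Rightarrow> (nat \<Rightarrow> 'g::ab_group_add) \<Rightarrow> (nat \<Rightarrow> 'g \<Rightarrow> 'k::field) \<Rightarrow> (nat \<Rightarrow> nat \<Rightarrow> int)
     \<Rightarrow> (nat \<Rightarrow> nat \<Rightarrow> 'k) \<Rightarrow> nat \<Rightarrow> nat \<Rightarrow> bool" where
  "linked \<theta> g \<chi> a lam i j \<longleftrightarrow> linkable \<theta> g \<chi> a i j \<and> lam i j \<noteq> 0"

definition linking_edge ::
  "nat \<Rightarrow> (nat \<Rightarrow> 'g::ab_group_add) \<Rightarrow> (nat \<Rightarrow> 'g \<Rightarrow> 'k::field) \<Rightarrow> (nat \<Rightarrow> nat \<Rightarrow> int)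
     \<Rightarrow> (nat \<Rightarrow> nat \<Rightarrow> 'k) \<Rightarrow> nat set \<Rightarrow> nat set \<Rightarrow> bool" where
  "linking_edge \<theta> g \<chi> a lam J1 J2 \<longleftrightarrow>
     (\<exists>i\<in>J1. \<exists>j\<in>J2. linked \<theta> g \<chi> a lam i j)"

definition bipartite :: "'v set \<Rightarrow> ('v \<Rightarrow> 'v \<Rightarrow> bool) \<Rightarrow> bool" where
  "bipartite V E \<longleftrightarrow> (\<exists>A B. A \<inter> B = {} \<and> A \<union> B = V \<and>
      (\<forall>x\<in>A. \<forall>y\<in>A. \<not> E x y) \<and> (\<forall>x\<in>B. \<forall>y\<in>B. \<not> E x y))"

definition simply_laced :: "nat \<Rightarrow> (nat \<Rightarrow> nat \<Rightarrow> int) \<Rightarrow> bool" where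
  "simply_laced \<theta> a \<longleftrightarrow> (\<forall>i\<in>idx \<theta>. \<forall>j\<in>idx \<theta>. i \<noteq> j \<longrightarrow> a i j \<in> {0, -1})"

definition root_of_unity :: "'k::field \<Rightarrow> bool" where
  "root_of_unity z \<longleftrightarrow> (\<exists>n>0. z ^ n = 1)"

(* multiplicative order; 0 if infinite (so "odd order" forces finite order) *)
definition mult_ord :: "'k::field \<Rightarrow> nat" where
  "mult_ord z = (if root_of_unity z then (LEAST n. n > 0 \<and> z ^ n = 1) else 0)"

end

theory Submission
  imports Defs
begin

(* Linked vertices i, j satisfy q_jj = q_ii^-1, and along the Dynkin diagram the q_ii are
   related by an equivalence R compatible with inversion: equality in the simply laced case,
   commensurability q^m = q'^n in the case of non-roots of unity. The hypotheses say exactly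
   that no q_ii is R-related to its inverse, so the R-classes occurring split into pairs
   {C, C^-1}. Choosing one class from each pair and putting a component on side A iff its
   class was chosen, every linking edge joins A to the other side. *)

lemma exists_saturated_half:
  assumes R: "equivp R"
    and R_\<sigma>: "\<And>z w. R z w \<Longrightarrow> R (\<sigma> z) (\<sigma> w)"
    and \<sigma>_\<sigma>: "\<And>z. \<sigma> (\<sigma> z) = z"
    and not_R_\<sigma>: "\<And>z. z \<in> Z \<Longrightarrow> \<not> R z (\<sigma> z)"
  shows "\<exists>S. (\<forall>z\<in>Z. z \<in> S \<longleftrightarrow> \<sigma> z \<notin> S) \<and> (\<forall>z w. R z w \<longrightarrow> (z \<in> S \<longleftrightarrow> w \<in> S))"
proof -
  have class_eq: "R z = R w" if "R z w" for z w
    using R that unfolding equivp_def by blast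
  \<comment> \<open>\<open>rep z\<close> depends only on the classes of \<open>z\<close> and \<open>\<sigma> z\<close>; \<open>S\<close> keeps the \<open>z\<close> whose class contains it\<close>
  define rep where "rep z = (SOME w. R z w \<or> R (\<sigma> z) w)" for z
  define S where "S = {z. R z (rep z)}"
  have rep_cong: "rep z = rep w" if "R z w" for z w
    unfolding rep_def using class_eq[OF that] class_eq[OF R_\<sigma>[OF that]] by simp
  have rep_\<sigma>: "rep (\<sigma> z) = rep z" for z
    unfolding rep_def by (simp add: \<sigma>_\<sigma> disj_commute)
  have "z \<in> S \<longleftrightarrow> \<sigma> z \<notin> S" if "z \<in> Z" for z
  proof -
    have "R z (rep z) \<or> R (\<sigma> z) (rep z)"
      unfolding rep_def by (rule someI[where x=z]) (simp add: equivp_reflp[OF R])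
    moreover have "\<not> (R z (rep z) \<and> R (\<sigma> z) (rep z))"
      using not_R_\<sigma>[OF that] equivp_transp[OF R] equivp_symp[OF R] by metis
    ultimately show ?thesis
      unfolding S_def using rep_\<sigma> by auto
  qed
  moreover have "z \<in> S \<longleftrightarrow> w \<in> S" if "R z w" for z w
    unfolding S_def using rep_cong[OF that] class_eq[OF that] by simp
  ultimately show ?thesis by blast
qed

lemma bipartite_if_edges_invert_label:
  assumes R: "equivp R"
    and R_\<sigma>: "\<And>z w. R z w \<Longrightarrow> R (\<sigma> z) (\<sigma> w)"
    and \<sigma>_\<sigma>: "\<And>z. \<sigma> (\<sigma> z) = z"
    and not_R_\<sigma>: "\<And>v. v \<in> V \<Longrightarrow> \<not> R (c v) (\<sigma> (c v))"
    and edge: "\<And>v w. v \<in> V \<Longrightarrow> w \<in> V \<Longrightarrow> E v w \<Longrightarrow> R (c w) (\<sigma> (c v))"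
  shows "bipartite V E"
proof -
  obtain S where half: "\<forall>z\<in>c ` V. z \<in> S \<longleftrightarrow> \<sigma> z \<notin> S"
    and saturated: "\<forall>z w. R z w \<longrightarrow> (z \<in> S \<longleftrightarrow> w \<in> S)"
    using exists_saturated_half[OF R R_\<sigma> \<sigma>_\<sigma>, of "c ` V"] not_R_\<sigma> by blast
  define A where "A = {v \<in> V. c v \<in> S}"
  have "\<not> E v w" if "v \<in> A \<and> w \<in> A \<or> v \<in> V - A \<and> w \<in> V - A" for v w
    using that half saturated edge unfolding A_def by blast
  then show ?thesis
    unfolding bipartite_def by (intro exI[of _ A] exI[of _ "V - A"]) (auto simp: A_def)
qed

lemma same_comp_imp_related:
  assumes R: "equivp R"
    and adj: "\<And>i j. dynkin_adj \<theta> a i j \<Longrightarrow> R (f i) (f j)"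
    and "same_comp \<theta> a i j"
  shows "R (f i) (f j)"
proof -
  have "(\<lambda>x y. dynkin_adj \<theta> a x y \<or> dynkin_adj \<theta> a y x)\<^sup>*\<^sup>* i j"
    using assms(3) unfolding same_comp_def by simp
  then show ?thesis
  proof (induction rule: rtranclp_induct)
    case base
    then show ?case by (rule equivp_reflp[OF R])
  next
    case (step j k)
    then have "R (f j) (f k)"
      using adj equivp_symp[OF R] by blast
    with step.IH show ?case
      by (rule equivp_transp[OF R])
  qed
qed

lemma same_comp_refl: "i \<in> idx \<theta> \<Longrightarrow> same_comp \<theta> a i i"
  unfolding same_comp_def by simp

lemma component_some_related:
  assumes R: "equivp R"
    and adj: "\<And>i j. dynkin_adj \<theta> a i j \<Longrightarrow> R (f i) (f j)"
    and J_comp: "J \<in> components \<theta> a"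
  shows "(SOME i. i \<in> J) \<in> idx \<theta> \<and> (\<forall>i\<in>J. R (f i) (f (SOME i. i \<in> J)))"
proof -
  obtain i0 where i0: "i0 \<in> idx \<theta>" and J: "J = component \<theta> a i0"
    using J_comp unfolding components_def by blast
  have related: "R (f i0) (f i)" if "i \<in> J" for i
    using that J same_comp_imp_related[OF R adj] unfolding component_def by simp
  have "i0 \<in> J"
    using i0 J same_comp_refl unfolding component_def by simp
  then have some_in: "(SOME i. i \<in> J) \<in> J"
    by (rule someI)
  then have "(SOME i. i \<in> J) \<in> idx \<theta>"
    using J unfolding component_def same_comp_def by blast
  moreover have "R (f i) (f (SOME i. i \<in> J))" if "i \<in> J" for i
    using equivp_transp[OF R equivp_symp[OF R related[OF that]] related[OF some_in]] .
  ultimately show ?thesis by blast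
qed

lemma qm_nonzero:
  assumes "finite_cartan_datum \<theta> g \<chi> a" "i \<in> idx \<theta>"
  shows "qm \<chi> g i i \<noteq> 0"
  using assms unfolding finite_cartan_datum_def is_character_def qm_def by simp

lemma qm_neq_one:
  assumes "finite_cartan_datum \<theta> g \<chi> a" "i \<in> idx \<theta>"
  shows "qm \<chi> g i i \<noteq> 1"
  using assms unfolding finite_cartan_datum_def by simp

lemma linked_qm_inverse:
  assumes D: "finite_cartan_datum \<theta> g \<chi> a"
    and "linked \<theta> g \<chi> a lam i j"
  shows "qm \<chi> g j j = inverse (qm \<chi> g i i)"
proof -
  have i: "i \<in> idx \<theta>" and j: "j \<in> idx \<theta>" and not_sc: "\<not> same_comp \<theta> a i j"
    and trivial: "trivial_product \<chi> i j"
    using assms(2) unfolding linked_def linkable_def by auto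
  have "a i j = 0"
  proof (rule ccontr)
    assume "a i j \<noteq> 0"
    then have "dynkin_adj \<theta> a i j"
      using i j not_sc same_comp_refl unfolding dynkin_adj_def by blast
    then show False
      using i j not_sc unfolding same_comp_def by auto
  qed
  then have "qm \<chi> g i j * qm \<chi> g j i = 1"
    using D i j unfolding finite_cartan_datum_def by auto
  moreover have "qm \<chi> g i i * qm \<chi> g i j = 1" "qm \<chi> g j i * qm \<chi> g j j = 1"
    using trivial unfolding trivial_product_def qm_def by simp_all
  ultimately show ?thesis
    by (metis inverse_unique mult.commute)
qed

lemma dynkin_adj_cartan_negative:
  assumes "finite_cartan_datum \<theta> g \<chi> a" "dynkin_adj \<theta> a i j"
  shows "a i j < 0" "a j i < 0"
proof -
  have "finite_type_cartan \<theta> a" using assms(1) unfolding finite_cartan_datum_def by simp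
  then have "a i j \<le> 0" "a j i \<le> 0" "a i j \<noteq> 0" "a j i \<noteq> 0"
    using assms(2) unfolding finite_type_cartan_def dynkin_adj_def by auto
  then show "a i j < 0" "a j i < 0" by simp_all
qed

lemma dynkin_adj_qm_power_eq:
  assumes D: "finite_cartan_datum \<theta> g \<chi> a" and adj: "dynkin_adj \<theta> a i j"
  shows "qm \<chi> g i i ^ nat (- a i j) = qm \<chi> g j j ^ nat (- a j i)"
proof -
  have "i \<in> idx \<theta>" "j \<in> idx \<theta>" using adj unfolding dynkin_adj_def by auto
  then have "qm \<chi> g i i powi a i j = qm \<chi> g j j powi a j i"
    using D unfolding finite_cartan_datum_def by (metis mult.commute)
  moreover have "a i j = - int (nat (- a i j))" "a j i = - int (nat (- a j i))"
    using dynkin_adj_cartan_negative[OF D adj] by simp_all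
  ultimately have "inverse (qm \<chi> g i i ^ nat (- a i j)) = inverse (qm \<chi> g j j ^ nat (- a j i))"
    by (metis power_int_minus power_int_of_nat)
  then show ?thesis by simp
qed

lemma simply_laced_adj_qm_eq:
  assumes D: "finite_cartan_datum \<theta> g \<chi> a" and "simply_laced \<theta> a"
    and adj: "dynkin_adj \<theta> a i j"
  shows "qm \<chi> g i i = qm \<chi> g j j"
proof -
  have "a i j \<in> {0, -1}" "a j i \<in> {0, -1}"
    using assms(2) adj unfolding simply_laced_def dynkin_adj_def by auto
  then have "nat (- a i j) = 1" "nat (- a j i) = 1"
    using dynkin_adj_cartan_negative[OF D adj] by auto
  then show ?thesis
    using dynkin_adj_qm_power_eq[OF D adj] by simp
qed

lemma bipartite_linking_graph_if_adjacent_related: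
  fixes R :: "'k::field \<Rightarrow> 'k \<Rightarrow> bool"
  assumes D: "finite_cartan_datum \<theta> g \<chi> a"
    and R: "equivp R"
    and R_inverse: "\<And>z w. R z w \<Longrightarrow> R (inverse z) (inverse w)"
    and not_R_inverse: "\<And>i. i \<in> idx \<theta> \<Longrightarrow> \<not> R (qm \<chi> g i i) (inverse (qm \<chi> g i i))"
    and adj: "\<And>i j. dynkin_adj \<theta> a i j \<Longrightarrow> R (qm \<chi> g i i) (qm \<chi> g j j)"
  shows "bipartite (components \<theta> a) (linking_edge \<theta> g \<chi> a lam)"
proof -
  define q where "q i = qm \<chi> g i i" for i
  define rep where "rep J = (SOME i. i \<in> J)" for J :: "nat set"
  have rep: "rep J \<in> idx \<theta> \<and> (\<forall>i\<in>J. R (q i) (q (rep J)))"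
    if "J \<in> components \<theta> a" for J
    using component_some_related[OF R adj that] unfolding rep_def q_def .
  show ?thesis
  proof (rule bipartite_if_edges_invert_label[OF R R_inverse inverse_inverse_eq, where c="q \<circ> rep"])
    show "\<not> R ((q \<circ> rep) J) (inverse ((q \<circ> rep) J))" if "J \<in> components \<theta> a" for J
      using rep[OF that] not_R_inverse unfolding q_def by simp
    show "R ((q \<circ> rep) J2) (inverse ((q \<circ> rep) J1))"
      if J1: "J1 \<in> components \<theta> a" and J2: "J2 \<in> components \<theta> a"
        and edge: "linking_edge \<theta> g \<chi> a lam J1 J2"
      for J1 J2
    proof -
      obtain i j where i: "i \<in> J1" and j: "j \<in> J2" and linked: "linked \<theta> g \<chi> a lam i j"
        using edge unfolding linking_edge_def by blast
      have "R (q (rep J2)) (q j)"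
        using rep[OF J2] j equivp_symp[OF R] by blast
      also have "q j = inverse (q i)"
        using linked_qm_inverse[OF D linked] unfolding q_def .
      finally have "R (q (rep J2)) (inverse (q i))" .
      moreover have "R (inverse (q i)) (inverse (q (rep J1)))"
        using rep[OF J1] i R_inverse by blast
      ultimately show ?thesis
        unfolding comp_def by (rule equivp_transp[OF R])
    qed
  qed
qed

lemma odd_mult_ord_imp_neq_inverse:
  fixes z :: "'k::field"
  assumes "odd (mult_ord z)" "z \<noteq> 1"
  shows "z \<noteq> inverse z"
proof
  assume z: "z = inverse z"
  have "\<not> root_of_unity (0::'k)"
    unfolding root_of_unity_def by (simp add: power_0_left)
  then have "z \<noteq> 0"
    using assms(1) unfolding mult_ord_def by auto
  then have square: "z ^ 2 = 1"
    using z by (metis power2_eq_square right_inverse)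
  have "(LEAST n. n > 0 \<and> z ^ n = 1) = 2"
  proof (rule Least_equality)
    show "2 \<le> n" if "0 < n \<and> z ^ n = 1" for n
      using that assms(2) by (cases "n = 1") auto
  qed (simp add: square)
  moreover have "root_of_unity z"
    unfolding root_of_unity_def using square by (intro exI[of _ 2]) simp
  ultimately have "mult_ord z = 2"
    unfolding mult_ord_def by simp
  then show False using assms(1) by simp
qed

definition commensurable :: "'a::monoid_mult \<Rightarrow> 'a \<Rightarrow> bool" where
  "commensurable z w \<longleftrightarrow> (\<exists>m>0. \<exists>n>0. z ^ m = w ^ n)"

lemma commensurable_equivp: "equivp (commensurable :: 'a::comm_monoid_mult \<Rightarrow> 'a \<Rightarrow> bool)"
proof (rule equivpI)
  show "reflp (commensurable :: 'a \<Rightarrow> 'a \<Rightarrow> bool)"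
    unfolding commensurable_def by (intro reflpI) (use zero_less_one in blast)
  show "symp (commensurable :: 'a \<Rightarrow> 'a \<Rightarrow> bool)"
    unfolding commensurable_def by (intro sympI) metis
  show "transp (commensurable :: 'a \<Rightarrow> 'a \<Rightarrow> bool)"
  proof (rule transpI)
    fix z w u :: 'a
    assume "commensurable z w" "commensurable w u"
    then obtain m n p r where pos: "m > 0" "n > 0" "p > 0" "r > 0"
      and "z ^ m = w ^ n" "w ^ p = u ^ r"
      unfolding commensurable_def by blast
    then have "z ^ (m * p) = u ^ (r * n)"
      by (metis power_mult mult.commute)
    then show "commensurable z u"
      unfolding commensurable_def using pos by (metis nat_0_less_mult_iff)
  qed
qed

lemma commensurable_inverse:
  "commensurable z w \<Longrightarrow> commensurable (inverse z) (inverse (w::'a::division_ring))"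
  unfolding commensurable_def by (metis power_inverse)

lemma commensurable_inverse_imp_root_of_unity:
  fixes z :: "'k::field"
  assumes "z \<noteq> 0" "commensurable z (inverse z)"
  shows "root_of_unity z"
proof -
  obtain m n where "m > 0" "n > 0" "z ^ m = inverse z ^ n"
    using assms(2) unfolding commensurable_def by blast
  then have "m + n > 0" "z ^ (m + n) = 1"
    using assms(1) by (simp_all add: power_add power_inverse)
  then show ?thesis unfolding root_of_unity_def by blast
qed

lemma dynkin_adj_qm_commensurable:
  assumes D: "finite_cartan_datum \<theta> g \<chi> a" and adj: "dynkin_adj \<theta> a i j"
  shows "commensurable (qm \<chi> g i i) (qm \<chi> g j j)"
proof -
  have "nat (- a i j) > 0" "nat (- a j i) > 0"
    using dynkin_adj_cartan_negative[OF D adj] by simp_all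
  then show ?thesis
    using dynkin_adj_qm_power_eq[OF D adj] unfolding commensurable_def by blast
qed

theorem lemma3p2:
  fixes \<theta> :: nat
    and g :: "nat \<Rightarrow> 'g::ab_group_add"
    and \<chi> :: "nat \<Rightarrow> 'g \<Rightarrow> 'k::{alg_closed_field, field_char_0}"
    and a :: "nat \<Rightarrow> nat \<Rightarrow> int"
    and lam :: "nat \<Rightarrow> nat \<Rightarrow> 'k"
  assumes "finite_cartan_datum \<theta> g \<chi> a"
    and "linking_parameters \<theta> g \<chi> a lam"
    and "(simply_laced \<theta> a \<and> (\<forall>i\<in>idx \<theta>. odd (mult_ord (qm \<chi> g i i))))
         \<or> (\<forall>i\<in>idx \<theta>. \<not> root_of_unity (qm \<chi> g i i))"
  shows "bipartite (components \<theta> a) (linking_edge \<theta> g \<chi> a lam)"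
  using assms(3)
proof
  assume H: "simply_laced \<theta> a \<and> (\<forall>i\<in>idx \<theta>. odd (mult_ord (qm \<chi> g i i)))"
  have not_inverse: "qm \<chi> g i i \<noteq> inverse (qm \<chi> g i i)" if "i \<in> idx \<theta>" for i
    using H that by (intro odd_mult_ord_imp_neq_inverse qm_neq_one[OF assms(1)]) simp_all
  show ?thesis
    by (rule bipartite_linking_graph_if_adjacent_related[OF assms(1) identity_equivp _
          not_inverse simply_laced_adj_qm_eq[OF assms(1) conjunct1[OF H]]]) simp
next
  assume H: "\<forall>i\<in>idx \<theta>. \<not> root_of_unity (qm \<chi> g i i)"
  have not_inverse: "\<not> commensurable (qm \<chi> g i i) (inverse (qm \<chi> g i i))" if "i \<in> idx \<theta>" for i
    using H that commensurable_inverse_imp_root_of_unity[OF qm_nonzero[OF assms(1) that]] by blast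
  show ?thesis
    by (rule bipartite_linking_graph_if_adjacent_related[OF assms(1) commensurable_equivp
          commensurable_inverse not_inverse dynkin_adj_qm_commensurable[OF assms(1)]])
qed

end
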